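(* Let $G_n(\lambda)=\binom{n}{\lambda}\mathbb P(\sigma(\omega)\in\mathcal T_\lambda)$ for $\lambda\vdash n$. Then \[ Z_n(\beta)\asymp\sum_{\lambda\vdash n}G_n(\lambda), \] and \[ e^{(h/\theta)n}Z_n(\beta,h)\asymp\begin{cases}\sum_{\lambda\vdash n}e^{h\lambda_1}G_n(\lambda),&h>0,\\ \sum_{\lambda\vdash n}e^{h\lambda_\theta}G_n(\lambda),&h<0.\end{cases} \]
   Context: Fix $\theta\in\{2,3,\dots\}$, $\beta>0$, $h\in\mathbb R$. Let $V=\{1,\dots,n\}$, $E$ the set of unordered pairs of distinct elements of $V$. Under $\mathbb P$ (expectation $\mathbb E$), let $\omega=(\omega_{xy}:xy\in E)$ be independent rate-1 Poisson point processes on $[0,\beta/n]$, and $\sigma(\omega)\in\mathcal S_n$ the time-ordered composition of the transpositions $(x,y)$ over all points $t\in\omega_{xy}$. $\mathcal C(\omega)$ is the set of cycles of $\sigma(\omega)$ (including fixed points), $\ell(\omega)=|\mathcal C(\omega)|$, $|\gamma|$ the size of a cycle. $Z_n(\beta)=\mathbb E[\theta^{\ell(\omega)}]$ and $Z_n(\beta,h)=e^{-(h/\theta)n}\mathbb E\big[\prod_{\gamma\in\mathcal C(\omega)}(e^{h|\gamma|}+\theta-1)\big]$. A partition $\lambda\vdash n$ here means $\lambda=(\lambda_1,\dots,\lambda_\theta)$ of nonnegative integers with $\lambda_1\ge\dots\ge\lambda_\theta$ and $\sum\lambda_j=n$; $\binom{n}{\lambda}=n!/(\lambda_1!\cdots\lambda_\theta!)$;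 $\mathcal T_\lambda$ is the Young subgroup of permutations fixing each of the sets $\{1,\dots,\lambda_1\}$, $\{\lambda_1+1,\dots,\lambda_1+\lambda_2\}$, etc. The notation $a_n\asymp b_n$ means there is a constant $C>0$ (not depending on $n$) with $\frac1C b_n\le a_n\le Cb_n$ for all $n$. *)

theory Defs
  imports "HOL-Probability.Probability" "HOL-Combinatorics.Transposition" "HOL-Combinatorics.Orbits"
begin

text \<open>Edges of the complete graph on V = {1..n}: unordered pairs, represented as (x,y) with x < y.\<close>
definition edges :: "nat \<Rightarrow> (nat \<times> nat) set" where
  "edges n = {(x, y). 1 \<le> x \<and> x < y \<and> y \<le> n}"

text \<open>Time-ordered composition of transpositions: the first list element is applied first.\<close>
definition compose_transp :: "(nat \<times> nat) list \<Rightarrow> (nat \<Rightarrow> nat)" where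
  "compose_transp es = fold (\<lambda>(x, y) s. Transposition.transpose x y \<circ> s) es id"

text \<open>Law of sigma(omega): independent rate-1 Poisson point processes on [0, beta/n] on each edge.
  Equivalently the total number of points is Poisson(|E| beta/n) and, listed in time order,
  the edge labels are i.i.d. uniform on E. (For n \<le> 1 there are no edges and sigma = id.)\<close>
definition sigma_pmf :: "nat \<Rightarrow> real \<Rightarrow> (nat \<Rightarrow> nat) pmf" where
  "sigma_pmf n \<beta> =
     (if edges n = {} then return_pmf id
      else bind_pmf (poisson_pmf (\<beta> / real n * real (card (edges n))))
             (\<lambda>k. map_pmf compose_transp (replicate_pmf k (pmf_of_set (edges n)))))"

definition cycles :: "nat \<Rightarrow> (nat \<Rightarrow> nat) \<Rightarrow> nat set set" where
  "cycles n s = (\<lambda>x. orbit s x) ` {1..n}"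

definition Z :: "nat \<Rightarrow> nat \<Rightarrow> real \<Rightarrow> real" where
  "Z \<theta> n \<beta> = measure_pmf.expectation (sigma_pmf n \<beta>) (\<lambda>s. real \<theta> ^ card (cycles n s))"

definition Zh :: "nat \<Rightarrow> nat \<Rightarrow> real \<Rightarrow> real \<Rightarrow> real" where
  "Zh \<theta> n \<beta> h = exp (- (h / real \<theta>) * real n) *
     measure_pmf.expectation (sigma_pmf n \<beta>)
       (\<lambda>s. \<Prod>\<gamma>\<in>cycles n s. exp (h * real (card \<gamma>)) + real \<theta> - 1)"

text \<open>Partitions of n into theta nonincreasing nonnegative parts, lam ! 0 = lambda_1, ...\<close>
definition partitions :: "nat \<Rightarrow> nat \<Rightarrow> nat list set" where
  "partitions \<theta> n = {lam. length lam = \<theta> \<and> sorted_wrt (\<ge>) lam \<and> sum_list lam = n}"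

definition multinom :: "nat \<Rightarrow> nat list \<Rightarrow> real" where
  "multinom n lam = fact n / (\<Prod>j\<leftarrow>lam. fact j)"

text \<open>j-th block (0-based) of the Young subgroup.\<close>
definition young_block :: "nat list \<Rightarrow> nat \<Rightarrow> nat set" where
  "young_block lam j = {sum_list (take j lam) + 1 .. sum_list (take (Suc j) lam)}"

definition young_subgroup :: "nat list \<Rightarrow> (nat \<Rightarrow> nat) set" where
  "young_subgroup lam = {s. \<forall>j < length lam. s ` young_block lam j = young_block lam j}"

definition G :: "nat \<Rightarrow> real \<Rightarrow> nat list \<Rightarrow> real" where
  "G n \<beta> lam = multinom n lam * measure_pmf.prob (sigma_pmf n \<beta>) (young_subgroup lam)"

definition asymp_equiv :: "(nat \<Rightarrow> real) \<Rightarrow> (nat \<Rightarrow> real) \<Rightarrow> bool" where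
  "asymp_equiv a b \<longleftrightarrow> (\<exists>C>0. \<forall>n. b n / C \<le> a n \<and> a n \<le> C * b n)"

end

theory Submission
  imports Defs "HOL-Combinatorics.Multiset_Permutations"
begin

(* Writing each factor exp (h |gamma|) + theta - 1 as a sum over theta colours, with weight
   exp (h |gamma|) for colour 0 and 1 for the others, turns the product over the cycles of sigma
   into a sum over the colourings of {1..n} that are constant on the cycles, i.e. whose colour
   classes are preserved by sigma, each weighted by exp (h * number of sites of colour 0).
   The law of sigma is invariant under conjugation, so the probability that sigma preserves the
   colour classes only depends on the multiset of colour counts mu, and equals P(sigma in T_lambda)
   for the decreasing rearrangement lambda of mu; there are multinomial(n; mu) colourings with
   counts mu. Hence exp ((h/theta) n) Z_n(beta,h) = sum over compositions mu of n into theta parts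
   of exp (h mu_1) G_n(sort mu), and Z_n(beta) is the case h = 0. Every partition is the
   rearrangement of at most theta! compositions, and mu_1 lies between lambda_theta and lambda_1,
   which gives both comparisons with constant theta!. *)

section \<open>Conjugation invariance of the random permutation\<close>

lemma transpose_conj:
  assumes "bij p"
  shows "p \<circ> Transposition.transpose x y \<circ> inv p = Transposition.transpose (p x) (p y)"
proof -
  have "Transposition.transpose (p x) (p y) \<circ> p = p \<circ> Transposition.transpose x y"
    using transpose_comp_eq[OF assms, of "p x" "p y"] assms by (simp add: bij_is_inj)
  then show ?thesis
    by (metis assms bij_is_surj comp_assoc comp_id surj_iff)
qed

definition edge_image :: "(nat \<Rightarrow> nat) \<Rightarrow> nat \<times> nat \<Rightarrow> nat \<times> nat" where
  "edge_image p e = (min (p (fst e)) (p (snd e)), max (p (fst e)) (p (snd e)))"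

lemma transpose_edge_image:
  "Transposition.transpose (fst (edge_image p e)) (snd (edge_image p e))
     = Transposition.transpose (p (fst e)) (p (snd e))"
  by (cases "p (fst e) \<le> p (snd e)") (auto simp: edge_image_def min_def max_def transpose_commute)

lemma fold_transpose_conj:
  assumes "bij p"
  shows "p \<circ> fold (\<lambda>(x, y) s. Transposition.transpose x y \<circ> s) es s0 \<circ> inv p
       = fold (\<lambda>(x, y) s. Transposition.transpose x y \<circ> s) (map (edge_image p) es) (p \<circ> s0 \<circ> inv p)"
proof (induction es arbitrary: s0)
  case (Cons e es)
  let ?F = "\<lambda>(x, y) s. Transposition.transpose x y \<circ> s"
  have F: "?F e' s = Transposition.transpose (fst e') (snd e') \<circ> s" for e' s
    by (simp add: case_prod_beta)
  have "p \<circ> ?F e s0 \<circ> inv p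
      = (p \<circ> Transposition.transpose (fst e) (snd e) \<circ> inv p) \<circ> (p \<circ> s0 \<circ> inv p)"
    using assms by (simp add: F fun_eq_iff bij_is_inj)
  also have "\<dots> = ?F (edge_image p e) (p \<circ> s0 \<circ> inv p)"
    by (simp only: F transpose_conj[OF assms] transpose_edge_image)
  finally have step: "p \<circ> ?F e s0 \<circ> inv p = ?F (edge_image p e) (p \<circ> s0 \<circ> inv p)" .
  have "p \<circ> fold ?F (e # es) s0 \<circ> inv p = p \<circ> fold ?F es (?F e s0) \<circ> inv p"
    by simp
  also have "\<dots> = fold ?F (map (edge_image p) es) (p \<circ> ?F e s0 \<circ> inv p)"
    by (rule Cons.IH)
  also have "\<dots> = fold ?F (map (edge_image p) (e # es)) (p \<circ> s0 \<circ> inv p)"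
    by (simp only: step list.map fold_Cons comp_apply)
  finally show ?case .
qed simp

lemma compose_transp_conj:
  assumes "bij p"
  shows "p \<circ> compose_transp es \<circ> inv p = compose_transp (map (edge_image p) es)"
proof -
  have "p \<circ> inv p = id"
    using bij_is_surj[OF assms] surj_iff by blast
  then show ?thesis
    using fold_transpose_conj[OF assms, of es id] by (simp add: compose_transp_def)
qed

lemma edge_image_in_edges:
  assumes "p permutes {1..n}" "e \<in> edges n"
  shows "edge_image p e \<in> edges n"
proof -
  obtain x y where e: "e = (x, y)" "1 \<le> x" "x < y" "y \<le> n"
    using assms(2) by (auto simp: edges_def)
  then have "x \<in> {1..n}" "y \<in> {1..n}"
    by auto
  then have "p x \<in> {1..n}" "p y \<in> {1..n}"
    using assms(1) by (simp_all only: permutes_in_image)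
  moreover have "p x \<noteq> p y"
    using e(3) permutes_inj[OF assms(1)] by (auto dest: injD)
  ultimately show ?thesis
    using e by (auto simp: edge_image_def edges_def min_def max_def)
qed

lemma bij_betw_edge_image:
  assumes "p permutes {1..n}"
  shows "bij_betw (edge_image p) (edges n) (edges n)"
proof (rule bij_betw_byWitness[where f' = "edge_image (inv p)"])
  have inv_p: "inv p permutes {1..n}"
    using permutes_inv[OF assms] .
  have "edge_image (inv p) (edge_image p (x, y)) = (x, y)" if "x < y" for x y
    using that permutes_inverses(2)[OF assms]
    by (cases "p x \<le> p y") (auto simp: edge_image_def min_def max_def)
  then show "\<forall>e\<in>edges n. edge_image (inv p) (edge_image p e) = e"
    by (auto simp: edges_def)
  have "edge_image p (edge_image (inv p) (x, y)) = (x, y)" if "x < y" for x y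
    using that permutes_inverses(1)[OF assms]
    by (cases "inv p x \<le> inv p y") (auto simp: edge_image_def min_def max_def)
  then show "\<forall>e\<in>edges n. edge_image p (edge_image (inv p) e) = e"
    by (auto simp: edges_def)
  show "edge_image p ` edges n \<subseteq> edges n" "edge_image (inv p) ` edges n \<subseteq> edges n"
    using edge_image_in_edges[OF assms] edge_image_in_edges[OF inv_p] by auto
qed

lemma finite_edges: "finite (edges n)"
  by (rule finite_subset[of _ "{1..n} \<times> {1..n}"]) (auto simp: edges_def)

lemma map_pmf_map_replicate_pmf:
  "map_pmf (map f) (replicate_pmf k q) = replicate_pmf k (map_pmf f q)"
proof (induction k)
  case (Suc k)
  then show ?case
    by (simp add: map_bind_pmf bind_map_pmf map_return_pmf Suc.IH[symmetric])
qed simp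

lemma sigma_pmf_conj:
  assumes "p permutes {1..n}"
  shows "map_pmf (\<lambda>s. p \<circ> s \<circ> inv p) (sigma_pmf n \<beta>) = sigma_pmf n \<beta>"
proof (cases "edges n = {}")
  case True
  then show ?thesis
    using permutes_inv_o[OF assms] by (simp add: sigma_pmf_def)
next
  case False
  have uniform: "map_pmf (edge_image p) (pmf_of_set (edges n)) = pmf_of_set (edges n)"
    using map_pmf_of_set_inj[of "edge_image p" "edges n"] bij_betw_edge_image[OF assms] False finite_edges
    by (simp add: bij_betw_def)
  have "(\<lambda>s. p \<circ> s \<circ> inv p) \<circ> compose_transp = compose_transp \<circ> map (edge_image p)"
    using compose_transp_conj[OF permutes_bij[OF assms]] by (simp add: fun_eq_iff)
  then have "map_pmf (\<lambda>s. p \<circ> s \<circ> inv p) (map_pmf compose_transp (replicate_pmf k (pmf_of_set (edges n))))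
      = map_pmf compose_transp (replicate_pmf k (pmf_of_set (edges n)))" for k
    by (metis pmf.map_comp map_pmf_map_replicate_pmf uniform)
  then show ?thesis
    using False by (simp add: sigma_pmf_def map_bind_pmf)
qed

lemma fold_transpose_permutes:
  assumes "set es \<subseteq> edges n" "s0 permutes {1..n}"
  shows "fold (\<lambda>(x, y) s. Transposition.transpose x y \<circ> s) es s0 permutes {1..n}"
  using assms
proof (induction es arbitrary: s0)
  case (Cons e es)
  have "Transposition.transpose (fst e) (snd e) permutes {1..n}"
    using Cons.prems(1) by (intro permutes_swap_id) (auto simp: edges_def)
  then have perm: "Transposition.transpose (fst e) (snd e) \<circ> s0 permutes {1..n}"
    using Cons.prems(2) by (rule permutes_compose[rotated])
  have fold_Cons_eq: "fold (\<lambda>(x, y) s. Transposition.transpose x y \<circ> s) (e # es) s0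
      = fold (\<lambda>(x, y) s. Transposition.transpose x y \<circ> s) es (Transposition.transpose (fst e) (snd e) \<circ> s0)"
    by (simp add: case_prod_beta comp_def)
  show ?case
    unfolding fold_Cons_eq using Cons.prems(1) by (intro Cons.IH[OF _ perm]) simp
qed simp

lemma sigma_pmf_permutes:
  assumes "s \<in> set_pmf (sigma_pmf n \<beta>)"
  shows "s permutes {1..n}"
proof (cases "edges n = {}")
  case True
  then show ?thesis
    using assms by (simp add: sigma_pmf_def permutes_id)
next
  case False
  then obtain es where "set es \<subseteq> edges n" "s = compose_transp es"
    using assms finite_edges by (auto simp: sigma_pmf_def set_replicate_pmf)
  then show ?thesis
    unfolding compose_transp_def using fold_transpose_permutes permutes_id by blast
qed

section \<open>Colourings constant on cycles\<close>

definition preserves_colouring :: "'a set \<Rightarrow> ('a \<Rightarrow> 'b) \<Rightarrow> ('a \<Rightarrow> 'a) \<Rightarrow> bool" where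
  "preserves_colouring A c s \<longleftrightarrow> (\<forall>x\<in>A. c (s x) = c x)"

definition colour_count :: "'a set \<Rightarrow> ('a \<Rightarrow> nat) \<Rightarrow> nat \<Rightarrow> nat" where
  "colour_count A c i = card {x\<in>A. c x = i}"

lemma orbit_eq_if_in_orbit:
  assumes "permutation s" "y \<in> orbit s x"
  shows "orbit s y = orbit s x"
  by (metis assms cyclic_on_orbit' orbit_cyclic_eq3)

lemma preserves_colouring_orbit:
  assumes "s permutes A" "preserves_colouring A c s" "x \<in> A" "y \<in> orbit s x"
  shows "c y = c x"
  using assms(4)
proof induction
  case (step y)
  then have "y \<in> A"
    using permutes_orbit_subset[OF assms(1,3)] by blast
  then show ?case
    using step.IH assms(2) by (simp add: preserves_colouring_def)
qed (use assms(2,3) in \<open>simp add: preserves_colouring_def\<close>)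

lemma sum_over_orbits:
  fixes f :: "'a set \<Rightarrow> 'b::comm_semiring_1"
  assumes "s permutes A" "finite A"
  shows "(\<Sum>x\<in>A. f (orbit s x)) = (\<Sum>\<gamma>\<in>orbit s ` A. of_nat (card \<gamma>) * f \<gamma>)"
proof -
  have perm: "permutation s"
    using assms permutation_permutes by blast
  have fibre: "{x\<in>A. orbit s x = orbit s y} = orbit s y" if "y \<in> A" for y
    using permutation_self_in_orbit[OF perm] orbit_eq_if_in_orbit[OF perm]
      permutes_orbit_subset[OF assms(1) that] by blast
  have "(\<Sum>x\<in>A. f (orbit s x)) = (\<Sum>\<gamma>\<in>orbit s ` A. \<Sum>x\<in>{x\<in>A. orbit s x = \<gamma>}. f (orbit s x))"
    by (rule sum.group[symmetric]) (use assms(2) in auto)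
  also have "\<dots> = (\<Sum>\<gamma>\<in>orbit s ` A. of_nat (card \<gamma>) * f \<gamma>)"
    by (rule sum.cong) (auto simp: fibre)
  finally show ?thesis .
qed

lemma inj_on_comp_orbit:
  "inj_on (\<lambda>g. \<lambda>x\<in>A. g (orbit s x)) (orbit s ` A \<rightarrow>\<^sub>E K)"
proof (rule inj_onI)
  fix g1 g2
  assume g: "g1 \<in> orbit s ` A \<rightarrow>\<^sub>E K" "g2 \<in> orbit s ` A \<rightarrow>\<^sub>E K"
    and eq: "(\<lambda>x\<in>A. g1 (orbit s x)) = (\<lambda>x\<in>A. g2 (orbit s x))"
  show "g1 = g2"
  proof (rule PiE_ext[OF g])
    fix \<gamma> assume "\<gamma> \<in> orbit s ` A"
    then obtain x where "x \<in> A" "\<gamma> = orbit s x"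
      by blast
    then show "g1 \<gamma> = g2 \<gamma>"
      using fun_cong[OF eq, of x] by simp
  qed
qed

lemma preserved_colouring_factors_through_orbits:
  assumes s: "s permutes A" and "finite A" and c: "c \<in> A \<rightarrow>\<^sub>E K" "preserves_colouring A c s"
  defines "g \<equiv> \<lambda>\<gamma>\<in>orbit s ` A. c (SOME y. y \<in> \<gamma>)"
  shows "g \<in> orbit s ` A \<rightarrow>\<^sub>E K" "(\<lambda>x\<in>A. g (orbit s x)) = c"
proof -
  have perm: "permutation s"
    using assms permutation_permutes by blast
  have g_orbit: "g (orbit s x) = c x" if "x \<in> A" for x
  proof -
    have "(SOME y. y \<in> orbit s x) \<in> orbit s x"
      using permutation_self_in_orbit[OF perm] by (rule someI)
    then show ?thesis
      using that preserves_colouring_orbit[OF s c(2) that] by (simp add: g_def)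
  qed
  show "g \<in> orbit s ` A \<rightarrow>\<^sub>E K"
    using c(1) g_orbit by (auto simp: g_def PiE_iff)
  show "(\<lambda>x\<in>A. g (orbit s x)) = c"
  proof
    fix x
    show "(\<lambda>x\<in>A. g (orbit s x)) x = c x"
      using g_orbit PiE_arb[OF c(1), of x] by (cases "x \<in> A") simp_all
  qed
qed

lemma bij_betw_orbit_colourings:
  assumes s: "s permutes A" and "finite A"
  shows "bij_betw (\<lambda>g. \<lambda>x\<in>A. g (orbit s x)) (orbit s ` A \<rightarrow>\<^sub>E K)
           {c \<in> A \<rightarrow>\<^sub>E K. preserves_colouring A c s}"
  unfolding bij_betw_def
proof (intro conjI inj_on_comp_orbit subset_antisym image_subsetI subsetI)
  fix g assume g: "g \<in> orbit s ` A \<rightarrow>\<^sub>E K"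
  have perm: "permutation s"
    using assms permutation_permutes by blast
  have "(\<lambda>x\<in>A. g (orbit s x)) \<in> A \<rightarrow>\<^sub>E K"
    using g by (auto simp: restrict_PiE_iff)
  moreover have "preserves_colouring A (\<lambda>x\<in>A. g (orbit s x)) s"
    using permutation_orbit_step[OF perm] permutes_in_image[OF s]
    by (simp add: preserves_colouring_def)
  ultimately show "(\<lambda>x\<in>A. g (orbit s x)) \<in> {c \<in> A \<rightarrow>\<^sub>E K. preserves_colouring A c s}"
    by simp
next
  fix c assume "c \<in> {c \<in> A \<rightarrow>\<^sub>E K. preserves_colouring A c s}"
  then have "c \<in> A \<rightarrow>\<^sub>E K" "preserves_colouring A c s"
    by simp_all
  note factors = preserved_colouring_factors_through_orbits[OF s assms(2) this]
  show "c \<in> (\<lambda>g. \<lambda>x\<in>A. g (orbit s x)) ` (orbit s ` A \<rightarrow>\<^sub>E K)"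
    by (rule image_eqI[where f = "\<lambda>g. \<lambda>x\<in>A. g (orbit s x)", OF factors(2)[symmetric] factors(1)])
qed

text \<open>Write each factor as \<open>\<Sum>k<\<theta>\<close> with weight \<open>exp (h * card \<gamma>)\<close> for colour \<open>0\<close> and \<open>1\<close>
  for the others, and multiply out.\<close>
lemma prod_orbits_expansion:
  fixes h :: real
  assumes s: "s permutes A" and "finite A" "\<theta> \<ge> 1"
  shows "(\<Prod>\<gamma>\<in>orbit s ` A. exp (h * real (card \<gamma>)) + real \<theta> - 1)
       = (\<Sum>c\<in>{c \<in> A \<rightarrow>\<^sub>E {..<\<theta>}. preserves_colouring A c s}. exp (h * real (colour_count A c 0)))"
proof -
  let ?\<phi> = "\<lambda>g. \<lambda>x\<in>A. g (orbit s x)"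
  define w where "w \<gamma> k = exp (h * (real (card \<gamma>) * of_bool (k = 0)))" for \<gamma> :: "'a set" and k :: nat
  have factor: "exp (h * real (card \<gamma>)) + real \<theta> - 1 = (\<Sum>k<\<theta>. w \<gamma> k)" for \<gamma>
  proof -
    obtain m where "\<theta> = Suc m"
      using assms(3) by (cases \<theta>) auto
    then show ?thesis
      by (simp add: w_def sum.lessThan_Suc_shift del: sum.lessThan_Suc)
  qed
  have weight: "(\<Prod>\<gamma>\<in>orbit s ` A. w \<gamma> (g \<gamma>)) = exp (h * real (colour_count A (?\<phi> g) 0))" for g
  proof -
    have "{x\<in>A. ?\<phi> g x = 0} = A \<inter> {x. g (orbit s x) = 0}"
      by auto
    then have "real (colour_count A (?\<phi> g) 0) = (\<Sum>x\<in>A. of_bool (g (orbit s x) = 0))"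
      using assms(2) by (simp add: colour_count_def)
    also have "\<dots> = (\<Sum>\<gamma>\<in>orbit s ` A. real (card \<gamma>) * of_bool (g \<gamma> = 0))"
      by (rule sum_over_orbits[OF s assms(2)])
    finally have count: "real (colour_count A (?\<phi> g) 0) = (\<Sum>\<gamma>\<in>orbit s ` A. real (card \<gamma>) * of_bool (g \<gamma> = 0))" .
    have "(\<Prod>\<gamma>\<in>orbit s ` A. w \<gamma> (g \<gamma>)) = exp (\<Sum>\<gamma>\<in>orbit s ` A. h * (real (card \<gamma>) * of_bool (g \<gamma> = 0)))"
      unfolding w_def using assms(2) by (simp only: exp_sum finite_imageI)
    also have "\<dots> = exp (h * real (colour_count A (?\<phi> g) 0))"
      by (simp only: count sum_distrib_left)
    finally show ?thesis .
  qed
  have "(\<Prod>\<gamma>\<in>orbit s ` A. exp (h * real (card \<gamma>)) + real \<theta> - 1) = (\<Prod>\<gamma>\<in>orbit s ` A. \<Sum>k<\<theta>. w \<gamma> k)"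
    by (simp only: factor)
  also have "\<dots> = (\<Sum>g\<in>orbit s ` A \<rightarrow>\<^sub>E {..<\<theta>}. \<Prod>\<gamma>\<in>orbit s ` A. w \<gamma> (g \<gamma>))"
    using assms(2) by (simp add: prod_sum_PiE)
  also have "\<dots> = (\<Sum>g\<in>orbit s ` A \<rightarrow>\<^sub>E {..<\<theta>}. exp (h * real (colour_count A (?\<phi> g) 0)))"
    by (simp only: weight)
  also have "\<dots> = (\<Sum>c\<in>{c \<in> A \<rightarrow>\<^sub>E {..<\<theta>}. preserves_colouring A c s}. exp (h * real (colour_count A c 0)))"
    by (rule sum.reindex_bij_betw[OF bij_betw_orbit_colourings[OF s assms(2)]])
  finally show ?thesis .
qed

lemma preserves_colouring_conj:
  assumes "p permutes A"
  shows "preserves_colouring A c (p \<circ> s \<circ> inv p) \<longleftrightarrow> preserves_colouring A (c \<circ> p) s"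
proof -
  have "(\<forall>x\<in>A. P x) \<longleftrightarrow> (\<forall>y\<in>A. P (p y))" for P
    by (metis assms permutes_image image_eqI imageE)
  from this[of "\<lambda>x. c (p (s (inv p x))) = c x"] show ?thesis
    using permutes_inverses(2)[OF assms] by (simp add: preserves_colouring_def)
qed

lemma preserves_colouring_comp_inj:
  "inj \<tau> \<Longrightarrow> preserves_colouring A (\<tau> \<circ> c) s \<longleftrightarrow> preserves_colouring A c s"
  by (auto simp: preserves_colouring_def inj_eq)

lemma preserves_colouring_cong:
  assumes "s permutes A" "\<And>x. x \<in> A \<Longrightarrow> c x = d x"
  shows "preserves_colouring A c s \<longleftrightarrow> preserves_colouring A d s"
  using assms permutes_in_image[OF assms(1)] by (simp add: preserves_colouring_def)

lemma prob_preserves_colouring_conj: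
  assumes "p permutes {1..n}"
  shows "measure_pmf.prob (sigma_pmf n \<beta>) {s. preserves_colouring {1..n} (c \<circ> p) s}
       = measure_pmf.prob (sigma_pmf n \<beta>) {s. preserves_colouring {1..n} c s}"
proof -
  have "measure_pmf.prob (map_pmf (\<lambda>s. p \<circ> s \<circ> inv p) (sigma_pmf n \<beta>)) {s. preserves_colouring {1..n} c s}
      = measure_pmf.prob (sigma_pmf n \<beta>) {s. preserves_colouring {1..n} (c \<circ> p) s}"
    by (simp only: measure_map_pmf vimage_def mem_Collect_eq preserves_colouring_conj[OF assms])
  then show ?thesis
    by (simp only: sigma_pmf_conj[OF assms])
qed

definition colour_counts :: "nat \<Rightarrow> 'a set \<Rightarrow> ('a \<Rightarrow> nat) \<Rightarrow> nat list" where
  "colour_counts \<theta> A c = map (colour_count A c) [0..<\<theta>]"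

lemma length_colour_counts [simp]: "length (colour_counts \<theta> A c) = \<theta>"
  by (simp add: colour_counts_def)

lemma nth_colour_counts: "i < \<theta> \<Longrightarrow> colour_counts \<theta> A c ! i = colour_count A c i"
  by (simp add: colour_counts_def)

lemma colour_count_eq_0:
  assumes "\<forall>x\<in>A. c x < \<theta>" "\<theta> \<le> i"
  shows "colour_count A c i = 0"
proof -
  have "{x\<in>A. c x = i} = {}"
    using assms by auto
  then show ?thesis
    unfolding colour_count_def by (simp only: card.empty)
qed

lemma sum_list_colour_counts:
  assumes "finite A" "\<forall>x\<in>A. c x < \<theta>"
  shows "sum_list (colour_counts \<theta> A c) = card A"
proof -
  have "sum_list (colour_counts \<theta> A c) = (\<Sum>i<\<theta>. \<Sum>x\<in>{x\<in>A. c x = i}. 1)"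
    by (simp add: colour_counts_def colour_count_def sum_list_sum_nth atLeast0LessThan)
  also have "\<dots> = (\<Sum>x\<in>A. 1)"
    by (rule sum.group) (use assms in auto)
  finally show ?thesis
    by simp
qed

lemma same_colour_counts_permutes:
  assumes "finite A" "\<And>i. colour_count A d i = colour_count A c i"
  obtains p where "p permutes A" "\<And>x. x \<in> A \<Longrightarrow> d x = c (p x)"
proof -
  have "\<exists>b. bij_betw b {x\<in>A. d x = i} {x\<in>A. c x = i}" for i
    using assms by (intro finite_same_card_bij) (simp_all add: colour_count_def)
  then obtain b where b: "\<And>i. bij_betw (b i) {x\<in>A. d x = i} {x\<in>A. c x = i}"
    by metis
  define p where "p x = (if x \<in> A then b (d x) x else x)" for x
  have p: "p x \<in> A \<and> c (p x) = d x" if "x \<in> A" for x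
    using bij_betwE[OF b[of "d x"]] that by (simp add: p_def)
  have "inj_on p A"
  proof
    fix x y assume xy: "x \<in> A" "y \<in> A" "p x = p y"
    then have "d x = d y"
      using p by metis
    with xy show "x = y"
      using bij_betw_imp_inj_on[OF b[of "d x"]] by (auto simp: p_def dest: inj_onD)
  qed
  moreover have "p ` A = A"
    using endo_inj_surj[OF assms(1) _ \<open>inj_on p A\<close>] p by blast
  ultimately have "p permutes A"
    by (intro bij_imp_permutes) (auto simp: bij_betw_def p_def)
  with p show ?thesis
    using that by metis
qed

lemma colour_counts_relabel:
  assumes "finite A" "\<forall>x\<in>A. c x < \<theta>" "\<forall>x\<in>A. d x < \<theta>"
    and "mset (colour_counts \<theta> A d) = mset (colour_counts \<theta> A c)"
  obtains \<tau> p where "inj \<tau>" "p permutes A" "\<And>x. x \<in> A \<Longrightarrow> d x = \<tau> (c (p x))"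
proof -
  obtain q where q: "q permutes {..<\<theta>}" "permute_list q (colour_counts \<theta> A c) = colour_counts \<theta> A d"
    using mset_eq_permutation[OF assms(4)] by (auto simp: colour_counts_def)
  have "colour_count A d i = colour_count A c (q i)" for i
  proof (cases "i < \<theta>")
    case True
    moreover have "q i < \<theta>"
      using True permutes_in_image[OF q(1)] by simp
    ultimately show ?thesis
      using permute_list_nth[of q "colour_counts \<theta> A c" i] q by (simp add: colour_counts_def)
  next
    case False
    then show ?thesis
      using q(1) assms(2,3) by (simp add: permutes_not_in colour_count_eq_0)
  qed
  also have "colour_count A c (q i) = colour_count A (inv q \<circ> c) i" for i
    using permutes_inv_eq[OF q(1)] by (simp add: colour_count_def eq_commute[of _ "q i"])
  finally obtain p where "p permutes A" "\<And>x. x \<in> A \<Longrightarrow> d x = (inv q \<circ> c) (p x)"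
    using same_colour_counts_permutes[OF assms(1)] by metis
  then show ?thesis
    using that permutes_inj[OF permutes_inv[OF q(1)]] by simp
qed

section \<open>Young subgroups\<close>

definition block_index :: "nat list \<Rightarrow> nat \<Rightarrow> nat" where
  "block_index lam x = (LEAST j. x \<le> sum_list (take (Suc j) lam))"

lemma sum_list_take_mono:
  fixes xs :: "nat list"
  assumes "j \<le> k"
  shows "sum_list (take j xs) \<le> sum_list (take k xs)"
proof -
  obtain d where "k = j + d"
    using le_Suc_ex[OF assms] by blast
  then show ?thesis
    by (simp add: take_add)
qed

lemma mem_young_block_iff:
  "x \<in> young_block lam j \<longleftrightarrow> sum_list (take j lam) < x \<and> x \<le> sum_list (take (Suc j) lam)"
  by (auto simp: young_block_def)

lemma block_index_eq:
  assumes "x \<in> young_block lam j"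
  shows "block_index lam x = j"
  unfolding block_index_def
proof (rule Least_equality)
  show "x \<le> sum_list (take (Suc j) lam)"
    using assms by (simp add: mem_young_block_iff)
  show "j \<le> k" if "x \<le> sum_list (take (Suc k) lam)" for k
  proof (rule ccontr)
    assume "\<not> j \<le> k"
    then have "sum_list (take (Suc k) lam) \<le> sum_list (take j lam)"
      by (intro sum_list_take_mono) simp
    then show False
      using that assms by (simp add: mem_young_block_iff)
  qed
qed

lemma block_index_in_young_block:
  assumes "x \<in> {1..sum_list lam}"
  shows "block_index lam x < length lam" "x \<in> young_block lam (block_index lam x)"
proof -
  have ex: "x \<le> sum_list (take (Suc (length lam - 1)) lam)"
    using assms by simp
  have le: "x \<le> sum_list (take (Suc (block_index lam x)) lam)"
    unfolding block_index_def by (rule LeastI[of "\<lambda>j. x \<le> sum_list (take (Suc j) lam)", OF ex])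
  have "block_index lam x \<le> length lam - 1"
    unfolding block_index_def by (rule Least_le[of "\<lambda>j. x \<le> sum_list (take (Suc j) lam)", OF ex])
  moreover have "lam \<noteq> []"
    using assms by auto
  ultimately show "block_index lam x < length lam"
    by (cases lam) simp_all
  have "sum_list (take (block_index lam x) lam) < x"
  proof (cases "block_index lam x")
    case (Suc j)
    then have "\<not> x \<le> sum_list (take (Suc j) lam)"
      unfolding block_index_def by (intro not_less_Least) simp
    then show ?thesis
      using Suc by simp
  qed (use assms in simp)
  with le show "x \<in> young_block lam (block_index lam x)"
    by (simp add: mem_young_block_iff)
qed

lemma young_block_subset:
  assumes "j < length lam"
  shows "young_block lam j \<subseteq> {1..sum_list lam}"
  using sum_list_take_mono[of "Suc j" "length lam" lam] assms by (auto simp: young_block_def)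

lemma card_young_block:
  assumes "j < length lam"
  shows "card (young_block lam j) = lam ! j"
  using assms by (simp add: young_block_def take_Suc_conv_app_nth)

lemma colour_counts_block_index:
  "colour_counts (length lam) {1..sum_list lam} (block_index lam) = lam"
proof (rule nth_equalityI)
  fix j assume "j < length (colour_counts (length lam) {1..sum_list lam} (block_index lam))"
  then have j: "j < length lam"
    by (simp add: colour_counts_def)
  have "{x \<in> {1..sum_list lam}. block_index lam x = j} = young_block lam j"
  proof
    show "{x \<in> {1..sum_list lam}. block_index lam x = j} \<subseteq> young_block lam j"
      using block_index_in_young_block(2) by blast
    show "young_block lam j \<subseteq> {x \<in> {1..sum_list lam}. block_index lam x = j}"
      using young_block_subset[OF j] block_index_eq by blast
  qed
  then show "colour_counts (length lam) {1..sum_list lam} (block_index lam) ! j = lam ! j"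
    using j card_young_block[OF j] by (simp add: colour_counts_def colour_count_def)
qed (simp add: colour_counts_def)

lemma young_subgroup_iff_preserves_colouring:
  assumes "s permutes {1..sum_list lam}"
  shows "s \<in> young_subgroup lam \<longleftrightarrow> preserves_colouring {1..sum_list lam} (block_index lam) s"
proof
  assume young: "s \<in> young_subgroup lam"
  show "preserves_colouring {1..sum_list lam} (block_index lam) s"
    unfolding preserves_colouring_def
  proof
    fix x assume x: "x \<in> {1..sum_list lam}"
    have "s ` young_block lam (block_index lam x) = young_block lam (block_index lam x)"
      using young block_index_in_young_block(1)[OF x] by (simp add: young_subgroup_def)
    then have "s x \<in> young_block lam (block_index lam x)"
      using block_index_in_young_block(2)[OF x] by blast
    then show "block_index lam (s x) = block_index lam x"
      by (rule block_index_eq)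
  qed
next
  assume pres: "preserves_colouring {1..sum_list lam} (block_index lam) s"
  show "s \<in> young_subgroup lam"
    unfolding young_subgroup_def
  proof (intro CollectI allI impI)
    fix j assume j: "j < length lam"
    have "s ` young_block lam j \<subseteq> young_block lam j"
    proof
      fix y assume "y \<in> s ` young_block lam j"
      then obtain x where x: "x \<in> young_block lam j" "y = s x"
        by blast
      then have x_in: "x \<in> {1..sum_list lam}"
        using young_block_subset[OF j] by blast
      then have "y \<in> {1..sum_list lam}"
        using x(2) assms by (simp only: permutes_in_image)
      moreover have "block_index lam y = j"
        using x pres x_in block_index_eq[OF x(1)] by (simp add: preserves_colouring_def)
      ultimately show "y \<in> young_block lam j"
        using block_index_in_young_block(2) by metis
    qed
    moreover have "inj_on s (young_block lam j)"
      using inj_on_subset[OF permutes_inj[OF assms] subset_UNIV] .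
    ultimately show "s ` young_block lam j = young_block lam j"
      using endo_inj_surj[of "young_block lam j" s] by (simp add: young_block_def)
  qed
qed

lemma measure_pmf_prob_cong:
  assumes "\<And>x. x \<in> set_pmf M \<Longrightarrow> x \<in> A \<longleftrightarrow> x \<in> B"
  shows "measure_pmf.prob M A = measure_pmf.prob M B"
proof -
  have "A \<inter> set_pmf M = B \<inter> set_pmf M"
    using assms by blast
  then show ?thesis
    by (metis measure_Int_set_pmf)
qed

lemma prob_preserves_colouring_eq_young:
  assumes "\<forall>x\<in>{1..n}. c x < length lam" "sum_list lam = n"
    and "mset lam = mset (colour_counts (length lam) {1..n} c)"
  shows "measure_pmf.prob (sigma_pmf n \<beta>) {s. preserves_colouring {1..n} c s}
       = measure_pmf.prob (sigma_pmf n \<beta>) (young_subgroup lam)"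
proof -
  have "\<forall>x\<in>{1..n}. block_index lam x < length lam"
    using block_index_in_young_block(1) assms(2) by blast
  then obtain \<tau> p where \<tau>: "inj \<tau>" and p: "p permutes {1..n}"
    and relabel: "\<And>x. x \<in> {1..n} \<Longrightarrow> block_index lam x = \<tau> (c (p x))"
    using colour_counts_relabel[of "{1..n}" c "length lam" "block_index lam"] assms
      colour_counts_block_index[of lam] by auto
  have "measure_pmf.prob (sigma_pmf n \<beta>) (young_subgroup lam)
      = measure_pmf.prob (sigma_pmf n \<beta>) {s. preserves_colouring {1..n} (\<tau> \<circ> (c \<circ> p)) s}"
  proof (rule measure_pmf_prob_cong)
    fix s assume "s \<in> set_pmf (sigma_pmf n \<beta>)"
    then have s: "s permutes {1..n}"
      by (rule sigma_pmf_permutes)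
    then have "s \<in> young_subgroup lam \<longleftrightarrow> preserves_colouring {1..n} (block_index lam) s"
      using young_subgroup_iff_preserves_colouring[of s lam] assms(2) by simp
    also have "\<dots> \<longleftrightarrow> preserves_colouring {1..n} (\<tau> \<circ> (c \<circ> p)) s"
      using relabel by (intro preserves_colouring_cong[OF s]) simp
    finally show "s \<in> young_subgroup lam \<longleftrightarrow> s \<in> {s. preserves_colouring {1..n} (\<tau> \<circ> (c \<circ> p)) s}"
      by simp
  qed
  also have "\<dots> = measure_pmf.prob (sigma_pmf n \<beta>) {s. preserves_colouring {1..n} c s}"
    by (simp only: preserves_colouring_comp_inj[OF \<tau>] prob_preserves_colouring_conj[OF p])
  finally show ?thesis ..
qed

section \<open>Counting colourings by their colour counts\<close>

definition mset_of_counts :: "nat list \<Rightarrow> nat multiset" where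
  "mset_of_counts mu = (\<Sum>i<length mu. replicate_mset (mu ! i) i)"

lemma count_mset_of_counts:
  "count (mset_of_counts mu) i = (if i < length mu then mu ! i else 0)"
  by (simp add: mset_of_counts_def count_sum sum.delta)

lemma size_mset_of_counts: "size (mset_of_counts mu) = sum_list mu"
  by (simp add: mset_of_counts_def sum_list_sum_nth atLeast0LessThan)

lemma set_mset_of_counts: "set_mset (mset_of_counts mu) \<subseteq> {..<length mu}"
proof
  fix i assume "i \<in># mset_of_counts mu"
  then have "count (mset_of_counts mu) i \<noteq> 0"
    by simp
  then show "i \<in> {..<length mu}"
    by (simp add: count_mset_of_counts split: if_splits)
qed

lemma count_mset_map_distinct:
  "distinct xs \<Longrightarrow> count (mset (map c xs)) i = colour_count (set xs) c i"
proof (induction xs)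
  case (Cons x xs)
  then show ?case
  proof (cases "c x = i")
    case True
    then have "{y \<in> set (x # xs). c y = i} = insert x {y \<in> set xs. c y = i}"
      by auto
    with True Cons show ?thesis
      by (simp add: colour_count_def)
  next
    case False
    then have "{y \<in> set (x # xs). c y = i} = {y \<in> set xs. c y = i}"
      by auto
    with False Cons show ?thesis
      by (simp add: colour_count_def)
  qed
qed (simp add: colour_count_def)

lemma mset_map_eq_mset_of_counts_iff:
  assumes "distinct xs" "\<forall>x\<in>set xs. c x < length mu"
  shows "mset (map c xs) = mset_of_counts mu \<longleftrightarrow> colour_counts (length mu) (set xs) c = mu"
proof -
  have "mset (map c xs) = mset_of_counts mu
      \<longleftrightarrow> (\<forall>i. colour_count (set xs) c i = (if i < length mu then mu ! i else 0))"
    by (simp only: multiset_eq_iff count_mset_map_distinct[OF assms(1)] count_mset_of_counts)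
  also have "\<dots> \<longleftrightarrow> (\<forall>i<length mu. colour_count (set xs) c i = mu ! i)"
    using colour_count_eq_0[OF assms(2)] by (auto simp: not_less)
  also have "\<dots> \<longleftrightarrow> colour_counts (length mu) (set xs) c = mu"
    by (metis length_colour_counts nth_colour_counts nth_equalityI)
  finally show ?thesis .
qed

lemma bij_betw_map_PiE:
  assumes "distinct xs"
  shows "bij_betw (\<lambda>c. map c xs) (set xs \<rightarrow>\<^sub>E K) {ys. length ys = length xs \<and> set ys \<subseteq> K}"
  unfolding bij_betw_def
proof (intro conjI inj_onI subset_antisym image_subsetI subsetI)
  fix c d assume "c \<in> set xs \<rightarrow>\<^sub>E K" "d \<in> set xs \<rightarrow>\<^sub>E K" "map c xs = map d xs"
  then show "c = d"
    by (intro PiE_ext[of c "set xs" "\<lambda>_. K" d]) auto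
next
  fix c assume "c \<in> set xs \<rightarrow>\<^sub>E K"
  then show "map c xs \<in> {ys. length ys = length xs \<and> set ys \<subseteq> K}"
    by (auto simp: PiE_iff)
next
  fix ys assume "ys \<in> {ys. length ys = length xs \<and> set ys \<subseteq> K}"
  then have len: "length ys = length xs" and K: "set ys \<subseteq> K"
    by simp_all
  define c where "c = (\<lambda>x\<in>set xs. the (map_of (zip xs ys) x))"
  have "map c xs = ys"
  proof (rule nth_equalityI)
    fix i assume "i < length (map c xs)"
    then show "map c xs ! i = ys ! i"
      using len assms by (simp add: c_def map_of_zip_nth)
  qed (simp add: len)
  moreover have "c x \<in> K" if "x \<in> set xs" for x
  proof -
    have "c x \<in> set (map c xs)"
      using that by simp
    then show ?thesis
      using calculation K by auto
  qed
  then have "c \<in> set xs \<rightarrow>\<^sub>E K"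
    by (simp add: c_def restrict_PiE_iff)
  ultimately show "ys \<in> (\<lambda>c. map c xs) ` (set xs \<rightarrow>\<^sub>E K)"
    by (intro image_eqI[where f = "\<lambda>c. map c xs" and x = c]) simp_all
qed

lemma card_colourings_with_counts:
  assumes "finite A" "sum_list mu = card A"
  shows "card {c \<in> A \<rightarrow>\<^sub>E {..<length mu}. colour_counts (length mu) A c = mu}
       = card (permutations_of_multiset (mset_of_counts mu))"
proof -
  obtain xs where xs: "set xs = A" "distinct xs"
    using finite_distinct_list[OF assms(1)] by blast
  have "bij_betw (\<lambda>c. map c xs) {c \<in> A \<rightarrow>\<^sub>E {..<length mu}. colour_counts (length mu) A c = mu}
      {ys \<in> {ys. length ys = length xs \<and> set ys \<subseteq> {..<length mu}}. mset ys = mset_of_counts mu}"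
    using bij_betw_map_PiE[OF xs(2)] mset_map_eq_mset_of_counts_iff[OF xs(2)] xs(1)
    by (intro bij_betw_Collect) (auto simp: PiE_iff)
  moreover have "{ys \<in> {ys. length ys = length xs \<and> set ys \<subseteq> {..<length mu}}. mset ys = mset_of_counts mu}
      = permutations_of_multiset (mset_of_counts mu)"
  proof -
    have "length ys = length xs" if "mset ys = mset_of_counts mu" for ys
    proof -
      have "length ys = size (mset_of_counts mu)"
        using that by (metis size_mset)
      then show ?thesis
        using size_mset_of_counts[of mu] assms(2) distinct_card[OF xs(2)] xs(1) by simp
    qed
    moreover have "set ys \<subseteq> {..<length mu}" if "mset ys = mset_of_counts mu" for ys
      using arg_cong[OF that, of set_mset] set_mset_of_counts[of mu] by simp
    ultimately show ?thesis
      by (auto simp: permutations_of_multiset_def)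
  qed
  ultimately show ?thesis
    by (simp add: bij_betw_same_card)
qed

lemma prod_fact_mset_of_counts:
  "(\<Prod>x\<in>set_mset (mset_of_counts mu). fact (count (mset_of_counts mu) x)) = (\<Prod>j\<leftarrow>mu. fact j :: nat)"
proof -
  have "(\<Prod>x\<in>set_mset (mset_of_counts mu). fact (count (mset_of_counts mu) x))
      = (\<Prod>x<length mu. fact (count (mset_of_counts mu) x) :: nat)"
    by (rule prod.mono_neutral_left) (auto simp: set_mset_of_counts simp flip: count_eq_zero_iff)
  also have "\<dots> = (\<Prod>x<length mu. fact (mu ! x))"
    by (simp add: count_mset_of_counts)
  also have "\<dots> = (\<Prod>j\<leftarrow>mu. fact j)"
    by (simp add: prod.list_conv_set_nth atLeast0LessThan)
  finally show ?thesis .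
qed

lemma card_colourings_with_counts_eq_multinom:
  assumes "finite A" "sum_list mu = card A"
  shows "real (card {c \<in> A \<rightarrow>\<^sub>E {..<length mu}. colour_counts (length mu) A c = mu})
       = multinom (card A) mu"
proof -
  have "card (permutations_of_multiset (mset_of_counts mu)) * (\<Prod>j\<leftarrow>mu. fact j) = fact (card A)"
    using card_permutations_of_multiset_aux[of "mset_of_counts mu"] assms(2)
    by (simp add: prod_fact_mset_of_counts size_mset_of_counts)
  then have "real (card (permutations_of_multiset (mset_of_counts mu))) * real (\<Prod>j\<leftarrow>mu. fact j) = fact (card A)"
    by (metis of_nat_mult of_nat_fact)
  moreover have "real (\<Prod>j\<leftarrow>mu. fact j) = (\<Prod>j\<leftarrow>mu. fact j :: real)"
    by (induction mu) simp_all
  ultimately have "real (card (permutations_of_multiset (mset_of_counts mu))) * (\<Prod>j\<leftarrow>mu. fact j) = fact (card A)"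
    by simp
  moreover have "(\<Prod>j\<leftarrow>mu. fact j :: real) > 0"
    by (induction mu) simp_all
  ultimately show ?thesis
    using card_colourings_with_counts[OF assms] by (simp add: multinom_def eq_divide_eq)
qed

lemma multinom_mset_eq:
  assumes "mset xs = mset ys"
  shows "multinom n xs = multinom n ys"
proof -
  have "(\<Prod>j\<leftarrow>xs. fact j :: real) = (\<Prod>j\<leftarrow>ys. fact j)"
    using assms by (simp flip: prod_mset_prod_list)
  then show ?thesis
    by (simp add: multinom_def)
qed

lemma G_nonneg: "G n \<beta> lam \<ge> 0"
proof -
  have "(\<Prod>j\<leftarrow>lam. fact j :: real) > 0"
    by (induction lam) simp_all
  then show ?thesis
    by (simp add: G_def multinom_def)
qed

section \<open>The partition functions as sums over compositions\<close>

definition compositions :: "nat \<Rightarrow> nat \<Rightarrow> nat list set" where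
  "compositions \<theta> n = {mu. length mu = \<theta> \<and> sum_list mu = n}"

lemma finite_compositions: "finite (compositions \<theta> n)"
proof (rule finite_subset)
  show "compositions \<theta> n \<subseteq> {xs. set xs \<subseteq> {0..n} \<and> length xs = \<theta>}"
    by (auto simp: compositions_def member_le_sum_list)
  show "finite {xs. set xs \<subseteq> {0..n} \<and> length xs = \<theta>}"
    by (rule finite_lists_length_eq) simp
qed

lemma partitions_subset_compositions: "partitions \<theta> n \<subseteq> compositions \<theta> n"
  by (auto simp: partitions_def compositions_def)

lemma colour_counts_in_compositions:
  assumes "finite A" "\<forall>x\<in>A. c x < \<theta>"
  shows "colour_counts \<theta> A c \<in> compositions \<theta> (card A)"
  using sum_list_colour_counts[OF assms] by (simp add: compositions_def colour_counts_def)

definition sort_desc :: "'a::linorder list \<Rightarrow> 'a list" where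
  "sort_desc xs = rev (sort xs)"

lemma mset_sort_desc [simp]: "mset (sort_desc xs) = mset xs"
  by (simp add: sort_desc_def)

lemma length_sort_desc [simp]: "length (sort_desc xs) = length xs"
  by (simp add: sort_desc_def)

lemma set_sort_desc [simp]: "set (sort_desc xs) = set xs"
  by (simp add: sort_desc_def)

lemma sum_list_sort_desc:
  fixes xs :: "'a::{linorder, comm_monoid_add} list"
  shows "sum_list (sort_desc xs) = sum_list xs"
  by (simp flip: sum_mset_sum_list)

lemma sorted_sort_desc: "sorted_wrt (\<ge>) (sort_desc xs)"
  by (simp add: sort_desc_def sorted_wrt_rev)

lemma sort_desc_eq:
  assumes "mset xs = mset ys" "sorted_wrt (\<ge>) ys"
  shows "sort_desc xs = ys"
proof -
  have "sort xs = rev ys"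
    using assms by (intro properties_for_sort) (simp_all add: sorted_wrt_rev)
  then show ?thesis
    by (simp add: sort_desc_def)
qed

lemma sort_desc_in_partitions: "mu \<in> compositions \<theta> n \<Longrightarrow> sort_desc mu \<in> partitions \<theta> n"
  using sorted_sort_desc[of mu] by (simp add: compositions_def partitions_def sum_list_sort_desc)

lemma sorted_desc_nth_bounds:
  fixes ys :: "'a::linorder list"
  assumes "sorted_wrt (\<ge>) ys" "x \<in> set ys"
  shows "ys ! (length ys - 1) \<le> x" "x \<le> ys ! 0"
proof -
  obtain i where i: "i < length ys" "ys ! i = x"
    using assms(2) by (auto simp: in_set_conv_nth)
  have mono: "ys ! k \<le> ys ! j" if "j \<le> k" "k < length ys" for j k
    using assms(1) that by (cases "j = k") (auto simp: sorted_wrt_iff_nth_less)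
  show "ys ! (length ys - 1) \<le> x" "x \<le> ys ! 0"
    using mono[of i "length ys - 1"] mono[of 0 i] i by auto
qed

lemma sort_desc_nth_bounds:
  assumes "xs \<noteq> []"
  shows "sort_desc xs ! (length xs - 1) \<le> xs ! 0" "xs ! 0 \<le> sort_desc xs ! 0"
proof -
  have "xs ! 0 \<in> set (sort_desc xs)"
    using assms by simp
  then show "sort_desc xs ! (length xs - 1) \<le> xs ! 0" "xs ! 0 \<le> sort_desc xs ! 0"
    using sorted_desc_nth_bounds[OF sorted_sort_desc] by (metis length_sort_desc)+
qed

lemma expectation_sum_indicator:
  fixes M :: "'a pmf" and e :: "'b \<Rightarrow> real"
  assumes "finite I"
  shows "measure_pmf.expectation M (\<lambda>s. \<Sum>i\<in>I. if P i s then e i else 0)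
       = (\<Sum>i\<in>I. e i * measure_pmf.prob M {s. P i s})"
proof -
  have "(\<lambda>s. \<Sum>i\<in>I. if P i s then e i else 0) = (\<lambda>s. \<Sum>i\<in>I. e i * indicator {s. P i s} s)"
    by (auto simp: indicator_def intro!: sum.cong)
  moreover have "integrable (measure_pmf M) (\<lambda>s. e i * indicator {s. P i s} s)" for i
    by (intro integrable_mult_right integrable_real_indicator) (auto simp: less_top[symmetric])
  ultimately show ?thesis
    by simp
qed

lemma sum_colourings_with_counts:
  fixes h :: real
  assumes "mu \<in> compositions \<theta> n" "\<theta> \<ge> 1"
  shows "(\<Sum>c\<in>{c \<in> {1..n} \<rightarrow>\<^sub>E {..<\<theta>}. colour_counts \<theta> {1..n} c = mu}.
            exp (h * real (colour_count {1..n} c 0))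
            * measure_pmf.prob (sigma_pmf n \<beta>) {s. preserves_colouring {1..n} c s})
       = exp (h * real (mu ! 0)) * G n \<beta> (sort_desc mu)"
proof -
  let ?C = "{c \<in> {1..n} \<rightarrow>\<^sub>E {..<\<theta>}. colour_counts \<theta> {1..n} c = mu}"
  let ?young = "measure_pmf.prob (sigma_pmf n \<beta>) (young_subgroup (sort_desc mu))"
  have len: "length mu = \<theta>" and sum: "sum_list mu = n"
    using assms(1) by (simp_all add: compositions_def)
  have "exp (h * real (colour_count {1..n} c 0))
        * measure_pmf.prob (sigma_pmf n \<beta>) {s. preserves_colouring {1..n} c s}
      = exp (h * real (mu ! 0)) * ?young" if c: "c \<in> ?C" for c
  proof -
    have "colour_count {1..n} c 0 = mu ! 0"
      using c assms(2) nth_colour_counts[of 0 \<theta> "{1..n}" c] by simp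
    moreover have "measure_pmf.prob (sigma_pmf n \<beta>) {s. preserves_colouring {1..n} c s} = ?young"
      using c len sum
      by (intro prob_preserves_colouring_eq_young) (auto simp: PiE_iff sum_list_sort_desc)
    ultimately show ?thesis
      by simp
  qed
  then have "(\<Sum>c\<in>?C. exp (h * real (colour_count {1..n} c 0))
        * measure_pmf.prob (sigma_pmf n \<beta>) {s. preserves_colouring {1..n} c s})
      = real (card ?C) * (exp (h * real (mu ! 0)) * ?young)"
    by simp
  also have "\<dots> = exp (h * real (mu ! 0)) * (multinom n (sort_desc mu) * ?young)"
    using card_colourings_with_counts_eq_multinom[of "{1..n}" mu] len sum
      multinom_mset_eq[OF mset_sort_desc, of n mu]
    by simp
  finally show ?thesis
    by (simp add: G_def)
qed

lemma expectation_cycle_product_eq_sum_colourings: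
  fixes h :: real
  assumes "\<theta> \<ge> 1"
  shows "measure_pmf.expectation (sigma_pmf n \<beta>) (\<lambda>s. \<Prod>\<gamma>\<in>cycles n s. exp (h * real (card \<gamma>)) + real \<theta> - 1)
       = (\<Sum>c\<in>{1..n} \<rightarrow>\<^sub>E {..<\<theta>}. exp (h * real (colour_count {1..n} c 0))
            * measure_pmf.prob (sigma_pmf n \<beta>) {s. preserves_colouring {1..n} c s})"
proof -
  let ?C = "{1..n} \<rightarrow>\<^sub>E {..<\<theta>}"
  let ?w = "\<lambda>c. exp (h * real (colour_count {1..n} c 0))"
  have finite_C: "finite ?C"
    by (simp add: finite_PiE)
  have "(\<Prod>\<gamma>\<in>cycles n s. exp (h * real (card \<gamma>)) + real \<theta> - 1)
      = (\<Sum>c\<in>?C. if preserves_colouring {1..n} c s then ?w c else 0)"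
    if "s \<in> set_pmf (sigma_pmf n \<beta>)" for s
  proof -
    have "(\<Prod>\<gamma>\<in>cycles n s. exp (h * real (card \<gamma>)) + real \<theta> - 1)
        = (\<Sum>c\<in>{c\<in>?C. preserves_colouring {1..n} c s}. ?w c)"
      unfolding cycles_def by (rule prod_orbits_expansion[OF sigma_pmf_permutes[OF that] _ assms]) simp
    also have "\<dots> = (\<Sum>c\<in>?C. if preserves_colouring {1..n} c s then ?w c else 0)"
      by (rule sum.inter_filter[OF finite_C])
    finally show ?thesis .
  qed
  then have "measure_pmf.expectation (sigma_pmf n \<beta>) (\<lambda>s. \<Prod>\<gamma>\<in>cycles n s. exp (h * real (card \<gamma>)) + real \<theta> - 1)
      = measure_pmf.expectation (sigma_pmf n \<beta>)
          (\<lambda>s. \<Sum>c\<in>?C. if preserves_colouring {1..n} c s then ?w c else 0)"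
    by (intro integral_cong_AE) (simp_all add: AE_measure_pmf_iff)
  also have "\<dots> = (\<Sum>c\<in>?C. ?w c * measure_pmf.prob (sigma_pmf n \<beta>) {s. preserves_colouring {1..n} c s})"
    by (rule expectation_sum_indicator[OF finite_C])
  finally show ?thesis .
qed

lemma expectation_cycle_product:
  fixes h :: real
  assumes "\<theta> \<ge> 1"
  shows "measure_pmf.expectation (sigma_pmf n \<beta>) (\<lambda>s. \<Prod>\<gamma>\<in>cycles n s. exp (h * real (card \<gamma>)) + real \<theta> - 1)
       = (\<Sum>mu\<in>compositions \<theta> n. exp (h * real (mu ! 0)) * G n \<beta> (sort_desc mu))"
  unfolding expectation_cycle_product_eq_sum_colourings[OF assms]
proof (subst sum.group[symmetric, OF finite_PiE finite_compositions image_subsetI])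
  show "colour_counts \<theta> {1..n} c \<in> compositions \<theta> n" if "c \<in> {1..n} \<rightarrow>\<^sub>E {..<\<theta>}" for c
    using that colour_counts_in_compositions[of "{1..n}" c \<theta>] by (auto simp: PiE_iff)
qed (use sum_colourings_with_counts[OF _ assms] in \<open>simp_all\<close>)

lemma Zh_eq_sum_compositions:
  assumes "\<theta> \<ge> 1"
  shows "exp ((h / real \<theta>) * real n) * Zh \<theta> n \<beta> h
       = (\<Sum>mu\<in>compositions \<theta> n. exp (h * real (mu ! 0)) * G n \<beta> (sort_desc mu))"
proof -
  have "exp ((h / real \<theta>) * real n) * exp (- (h / real \<theta>) * real n) = 1"
    by (simp flip: exp_add)
  then show ?thesis
    by (simp add: Zh_def expectation_cycle_product[OF assms] mult.assoc[symmetric])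
qed

lemma Z_eq_Zh_0: "Z \<theta> n \<beta> = Zh \<theta> n \<beta> 0"
  by (simp add: Z_def Zh_def)

section \<open>Compositions versus partitions\<close>

lemma card_sort_desc_fibre_le:
  assumes "length lam = \<theta>"
  shows "card {mu\<in>compositions \<theta> n. sort_desc mu = lam} \<le> fact \<theta>"
proof -
  let ?P = "permutations_of_multiset (mset lam)"
  have "{mu\<in>compositions \<theta> n. sort_desc mu = lam} \<subseteq> ?P"
  proof
    fix mu assume "mu \<in> {mu\<in>compositions \<theta> n. sort_desc mu = lam}"
    then have "mset mu = mset lam"
      using mset_sort_desc[of mu] by simp
    then show "mu \<in> ?P"
      by (rule permutations_of_multisetI)
  qed
  then have "card {mu\<in>compositions \<theta> n. sort_desc mu = lam} \<le> card ?P"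
    by (rule card_mono[OF finite_permutations_of_multiset])
  also have "\<dots> \<le> card ?P * (\<Prod>x\<in>set_mset (mset lam). fact (count (mset lam) x))"
    using mult_le_mono2[OF prod_ge_1[where f = "\<lambda>x. fact (count (mset lam) x)"], where k = "card ?P"]
    by (simp add: fact_ge_1)
  also have "\<dots> = fact \<theta>"
    using card_permutations_of_multiset_aux[of "mset lam"] assms by simp
  finally show ?thesis .
qed

lemma finite_partitions: "finite (partitions \<theta> n)"
  using finite_subset[OF partitions_subset_compositions finite_compositions] .

lemma sum_compositions_group_sort_desc:
  "(\<Sum>mu\<in>compositions \<theta> n. f mu)
     = (\<Sum>lam\<in>partitions \<theta> n. \<Sum>mu\<in>{mu\<in>compositions \<theta> n. sort_desc mu = lam}. f mu)"
  by (rule sum.group[symmetric, OF finite_compositions finite_partitions image_subsetI])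
    (rule sort_desc_in_partitions)

text \<open>Group the compositions by their decreasing rearrangement; each fibre has at most
  \<open>\<theta>!\<close> elements.\<close>
lemma sum_compositions_bounds:
  fixes w W g :: "nat list \<Rightarrow> real"
  assumes g: "\<And>lam. lam \<in> partitions \<theta> n \<Longrightarrow> 0 \<le> g lam"
    and w: "\<And>mu. mu \<in> compositions \<theta> n \<Longrightarrow> 0 \<le> w mu \<and> w mu \<le> W (sort_desc mu)"
    and attained: "\<And>lam. lam \<in> partitions \<theta> n \<Longrightarrow> \<exists>mu\<in>compositions \<theta> n. sort_desc mu = lam \<and> w mu = W lam"
  shows "0 \<le> (\<Sum>lam\<in>partitions \<theta> n. W lam * g lam)"
    and "(\<Sum>lam\<in>partitions \<theta> n. W lam * g lam) \<le> (\<Sum>mu\<in>compositions \<theta> n. w mu * g (sort_desc mu))"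
    and "(\<Sum>mu\<in>compositions \<theta> n. w mu * g (sort_desc mu)) \<le> fact \<theta> * (\<Sum>lam\<in>partitions \<theta> n. W lam * g lam)"
proof -
  let ?F = "\<lambda>lam. {mu\<in>compositions \<theta> n. sort_desc mu = lam}"
  have finite_fibre: "finite (?F lam)" for lam
    using finite_compositions by simp
  have grouped: "(\<Sum>mu\<in>compositions \<theta> n. w mu * g (sort_desc mu))
      = (\<Sum>lam\<in>partitions \<theta> n. \<Sum>mu\<in>?F lam. w mu * g lam)"
    unfolding sum_compositions_group_sort_desc by (intro sum.cong refl) simp
  have fibre_bounds: "0 \<le> W lam * g lam \<and> W lam * g lam \<le> (\<Sum>mu\<in>?F lam. w mu * g lam)
      \<and> (\<Sum>mu\<in>?F lam. w mu * g lam) \<le> fact \<theta> * (W lam * g lam)"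
    if lam: "lam \<in> partitions \<theta> n" for lam
  proof -
    obtain mu0 where mu0: "mu0 \<in> ?F lam" "w mu0 = W lam"
      using attained[OF lam] by blast
    have w_fibre: "0 \<le> w mu \<and> w mu \<le> W lam" if "mu \<in> ?F lam" for mu
      using w that by auto
    then have W: "0 \<le> W lam"
      using mu0(1) by force
    have "w mu0 * g lam \<le> (\<Sum>mu\<in>?F lam. w mu * g lam)"
      using w_fibre g[OF lam] by (intro member_le_sum[OF mu0(1) _ finite_fibre]) simp
    moreover have "(\<Sum>mu\<in>?F lam. w mu * g lam) \<le> (\<Sum>mu\<in>?F lam. W lam * g lam)"
      using w_fibre g[OF lam] by (intro sum_mono mult_right_mono) auto
    moreover have "card (?F lam) \<le> fact \<theta>"
      using card_sort_desc_fibre_le[of lam \<theta> n] lam by (simp add: partitions_def)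
    then have "real (card (?F lam)) \<le> fact \<theta>"
      using of_nat_mono by fastforce
    then have "(\<Sum>mu\<in>?F lam. W lam * g lam) \<le> fact \<theta> * (W lam * g lam)"
      using W g[OF lam] by (simp add: mult_right_mono)
    ultimately show ?thesis
      using W g[OF lam] mu0(2) by simp
  qed
  show "0 \<le> (\<Sum>lam\<in>partitions \<theta> n. W lam * g lam)"
    using fibre_bounds by (intro sum_nonneg) blast
  show "(\<Sum>lam\<in>partitions \<theta> n. W lam * g lam) \<le> (\<Sum>mu\<in>compositions \<theta> n. w mu * g (sort_desc mu))"
    unfolding grouped using fibre_bounds by (intro sum_mono) blast
  show "(\<Sum>mu\<in>compositions \<theta> n. w mu * g (sort_desc mu)) \<le> fact \<theta> * (\<Sum>lam\<in>partitions \<theta> n. W lam * g lam)"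
    unfolding grouped sum_distrib_left using fibre_bounds by (intro sum_mono) blast
qed

lemma asymp_equivI:
  fixes a b :: "nat \<Rightarrow> real"
  assumes "C \<ge> 1" "\<And>n. 0 \<le> b n" "\<And>n. b n \<le> a n" "\<And>n. a n \<le> C * b n"
  shows "asymp_equiv a b"
  unfolding asymp_equiv_def
proof (intro exI[of _ C] conjI allI)
  show "C > 0"
    using assms(1) by simp
  fix n
  have "b n / C \<le> b n / 1"
    using assms(1,2) by (intro divide_left_mono) auto
  then show "b n / C \<le> a n"
    using assms(3)[of n] by simp
  show "a n \<le> C * b n"
    by (rule assms(4))
qed

lemma asymp_equiv_sum_compositions_sum_partitions:
  fixes w W :: "nat list \<Rightarrow> real" and g :: "nat \<Rightarrow> nat list \<Rightarrow> real"
  assumes "\<And>n lam. lam \<in> partitions \<theta> n \<Longrightarrow> 0 \<le> g n lam"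
    and "\<And>n mu. mu \<in> compositions \<theta> n \<Longrightarrow> 0 \<le> w mu \<and> w mu \<le> W (sort_desc mu)"
    and "\<And>n lam. lam \<in> partitions \<theta> n \<Longrightarrow> \<exists>mu\<in>compositions \<theta> n. sort_desc mu = lam \<and> w mu = W lam"
  shows "asymp_equiv (\<lambda>n. \<Sum>mu\<in>compositions \<theta> n. w mu * g n (sort_desc mu))
           (\<lambda>n. \<Sum>lam\<in>partitions \<theta> n. W lam * g n lam)"
proof (rule asymp_equivI)
  fix n
  note bounds = sum_compositions_bounds[where g = "g n", OF assms(1) assms(2) assms(3)]
  show "0 \<le> (\<Sum>lam\<in>partitions \<theta> n. W lam * g n lam)"
    by (rule bounds(1))
  show "(\<Sum>lam\<in>partitions \<theta> n. W lam * g n lam) \<le> (\<Sum>mu\<in>compositions \<theta> n. w mu * g n (sort_desc mu))"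
    by (rule bounds(2))
  show "(\<Sum>mu\<in>compositions \<theta> n. w mu * g n (sort_desc mu)) \<le> fact \<theta> * (\<Sum>lam\<in>partitions \<theta> n. W lam * g n lam)"
    by (rule bounds(3))
qed simp

lemma asymp_equiv_Zh_nonneg:
  assumes "\<theta> \<ge> 1" "h \<ge> 0"
  shows "asymp_equiv (\<lambda>n. exp ((h / real \<theta>) * real n) * Zh \<theta> n \<beta> h)
           (\<lambda>n. \<Sum>lam\<in>partitions \<theta> n. exp (h * real (lam ! 0)) * G n \<beta> lam)"
  unfolding Zh_eq_sum_compositions[OF assms(1)]
proof (rule asymp_equiv_sum_compositions_sum_partitions)
  show "0 \<le> G n \<beta> lam" for n lam
    by (rule G_nonneg)
  show "0 \<le> exp (h * real (mu ! 0)) \<and> exp (h * real (mu ! 0)) \<le> exp (h * real (sort_desc mu ! 0))"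
    if "mu \<in> compositions \<theta> n" for n mu
  proof -
    have "mu \<noteq> []"
      using that assms(1) by (auto simp: compositions_def)
    then have "real (mu ! 0) \<le> real (sort_desc mu ! 0)"
      using sort_desc_nth_bounds(2) by simp
    then show ?thesis
      using assms(2) by (simp add: mult_left_mono)
  qed
  show "\<exists>mu\<in>compositions \<theta> n. sort_desc mu = lam \<and> exp (h * real (mu ! 0)) = exp (h * real (lam ! 0))"
    if "lam \<in> partitions \<theta> n" for n lam
    using that partitions_subset_compositions sort_desc_eq[of lam lam] by (auto simp: partitions_def)
qed

lemma asymp_equiv_Zh_nonpos:
  assumes "\<theta> \<ge> 1" "h \<le> 0"
  shows "asymp_equiv (\<lambda>n. exp ((h / real \<theta>) * real n) * Zh \<theta> n \<beta> h)
           (\<lambda>n. \<Sum>lam\<in>partitions \<theta> n. exp (h * real (lam ! (\<theta> - 1))) * G n \<beta> lam)"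
  unfolding Zh_eq_sum_compositions[OF assms(1)]
proof (rule asymp_equiv_sum_compositions_sum_partitions)
  show "0 \<le> G n \<beta> lam" for n lam
    by (rule G_nonneg)
  show "0 \<le> exp (h * real (mu ! 0)) \<and> exp (h * real (mu ! 0)) \<le> exp (h * real (sort_desc mu ! (\<theta> - 1)))"
    if "mu \<in> compositions \<theta> n" for n mu
  proof -
    have "mu \<noteq> []" "length mu = \<theta>"
      using that assms(1) by (auto simp: compositions_def)
    then have "real (sort_desc mu ! (\<theta> - 1)) \<le> real (mu ! 0)"
      using sort_desc_nth_bounds(1)[of mu] by simp
    then show ?thesis
      using assms(2) by (simp add: mult_left_mono_neg)
  qed
  show "\<exists>mu\<in>compositions \<theta> n. sort_desc mu = lam \<and> exp (h * real (mu ! 0)) = exp (h * real (lam ! (\<theta> - 1)))"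
    if "lam \<in> partitions \<theta> n" for n lam
  proof (rule bexI[of _ "rev lam"])
    show "rev lam \<in> compositions \<theta> n"
      using that by (simp add: partitions_def compositions_def)
    show "sort_desc (rev lam) = lam \<and> exp (h * real (rev lam ! 0)) = exp (h * real (lam ! (\<theta> - 1)))"
      using that assms(1) sort_desc_eq[of "rev lam" lam] by (auto simp: partitions_def rev_nth)
  qed
qed

theorem lemma2p2:
  fixes \<theta> :: nat and \<beta> h :: real
  assumes "\<theta> \<ge> 2" and "\<beta> > 0"
  shows "asymp_equiv (\<lambda>n. Z \<theta> n \<beta>) (\<lambda>n. \<Sum>lam\<in>partitions \<theta> n. G n \<beta> lam)
    \<and> (h > 0 \<longrightarrow> asymp_equiv (\<lambda>n. exp ((h / real \<theta>) * real n) * Zh \<theta> n \<beta> h)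
            (\<lambda>n. \<Sum>lam\<in>partitions \<theta> n. exp (h * real (lam ! 0)) * G n \<beta> lam))
    \<and> (h < 0 \<longrightarrow> asymp_equiv (\<lambda>n. exp ((h / real \<theta>) * real n) * Zh \<theta> n \<beta> h)
            (\<lambda>n. \<Sum>lam\<in>partitions \<theta> n. exp (h * real (lam ! (\<theta> - 1))) * G n \<beta> lam))"
proof -
  have \<theta>: "\<theta> \<ge> 1"
    using assms(1) by simp
  have "Z \<theta> n \<beta> = exp ((0 / real \<theta>) * real n) * Zh \<theta> n \<beta> 0" for n
    by (simp add: Z_eq_Zh_0)
  then show ?thesis
    using asymp_equiv_Zh_nonneg[OF \<theta>, of 0 \<beta>] asymp_equiv_Zh_nonneg[OF \<theta>, of h \<beta>]
      asymp_equiv_Zh_nonpos[OF \<theta>, of h \<beta>]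
    by simp
qed

end
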